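(* Let $n\ge 2$ be an integer and let $\mathcal{P}(\lambda)=(8n^3-12n^2+2n+1)\lambda^4+(-64n^6+192n^5-192n^4+64n^3+4n^2+2n-4)\lambda^3+(-96n^5+224n^4-168n^3+52n^2-18n+6)\lambda^2+(32n^5-112n^4+128n^3-68n^2+22n-4)\lambda+16n^4-32n^3+24n^2-8n+1.$ Then $\mathcal{P}(\lambda)$ has a unique root larger than $(2n-1)^2$, and all other roots of $\mathcal{P}$ are less than $1$. *)

theory Defs
  imports Complex_Main
begin

definition calP :: "nat \<Rightarrow> real \<Rightarrow> real" where
  "calP n x =
     (8*real n^3 - 12*real n^2 + 2*real n + 1) * x^4
   + (-64*real n^6 + 192*real n^5 - 192*real n^4 + 64*real n^3 + 4*real n^2 + 2*real n - 4) * x^3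
   + (-96*real n^5 + 224*real n^4 - 168*real n^3 + 52*real n^2 - 18*real n + 6) * x^2
   + (32*real n^5 - 112*real n^4 + 128*real n^3 - 68*real n^2 + 22*real n - 4) * x
   + (16*real n^4 - 32*real n^3 + 24*real n^2 - 8*real n + 1)"

end

theory Submission
  imports Defs "HOL-Real_Asymp.Real_Asymp"
begin

(* Write P(x) = a4 x^4 + a3 x^3 + a2 x^2 + a1 x + a0 and K = (2n - 1)^2. For n >= 2 we have
   a2 <= 0 <= a1, a0, so on [1, K] every monomial except a3 x^3 is dominated by a multiple of x^3,
   giving P(x) <= x^3 (a4 K + a3 + a1 + a0) < 0. Beyond K the function
   P(x)/x^3 = a4 x + a3 + a2/x + a1/x^2 + a0/x^3 has derivative at least a4 - (2 a1 + 3 a0)/K^3 > 0;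
   since P(K) < 0 and P tends to infinity, P has exactly one root above K.
   After substituting n = k + 2 all sign conditions are polynomials in k with coefficients of one sign. *)

locale quartic_root_separation =
  fixes P :: "real \<Rightarrow> real" and a4 a3 a2 a1 a0 K :: real
  assumes quartic_eq: "P x = a4*x^4 + a3*x^3 + a2*x^2 + a1*x + a0"
    and a2_nonpos: "a2 \<le> 0" and a1_nonneg: "a1 \<ge> 0" and a0_nonneg: "a0 \<ge> 0"
    and K_ge_1: "K \<ge> 1"
    and negative_at_K: "a4*K + a3 + a1 + a0 < 0"
    and steep_at_K: "2*a1 + 3*a0 < a4*K^3"
begin

lemma lead_pos: "a4 > 0"
proof -
  have "0 < a4*K^3" using steep_at_K a1_nonneg a0_nonneg by linarith
  then show ?thesis using K_ge_1 by (simp add: zero_less_mult_iff)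
qed

lemma negative_on_interval:
  assumes "1 \<le> x" "x \<le> K"
  shows "P x < 0"
proof -
  have x3: "1 \<le> x^3" using assms(1) by simp
  have "P x \<le> a4*K*x^3 + a3*x^3 + a1*x^3 + a0*x^3"
  proof -
    have "a4*x^4 \<le> a4*K*x^3"
      using assms lead_pos by (simp add: power_numeral_reduce)
    moreover have "a2*x^2 \<le> 0" using a2_nonpos by (simp add: mult_nonpos_nonneg)
    moreover have "a1*x \<le> a1*x^3"
      using power_increasing[of 1 3 x] assms(1) a1_nonneg by (simp add: mult_left_mono)
    moreover have "a0 \<le> a0*x^3" using x3 a0_nonneg by (simp add: mult_le_cancel_left1)
    ultimately show ?thesis unfolding quartic_eq by linarith
  qed
  also have "\<dots> = x^3 * (a4*K + a3 + a1 + a0)" by (simp add: algebra_simps)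
  also have "\<dots> < 0" using assms(1) negative_at_K by (intro mult_pos_neg) simp_all
  finally show ?thesis .
qed

lemma P_over_cube_deriv_pos:
  assumes "K \<le> z"
  shows "0 < a4 - a2/z^2 - 2*a1/z^3 - 3*a0/z^4"
proof -
  have K_pos: "0 < K^3" and z_pos: "0 < z" using assms K_ge_1 by simp_all
  have K3_le_z3: "K^3 \<le> z^3" using assms K_ge_1 by (intro power_mono) auto
  also have "z^3 \<le> z^4" using power_increasing[of 3 4 z] assms K_ge_1 by simp
  finally have "K^3 \<le> z^4" .
  with K3_le_z3 have "2*a1/z^3 \<le> 2*a1/K^3" "3*a0/z^4 \<le> 3*a0/K^3"
    using K_pos z_pos a1_nonneg a0_nonneg by (auto intro!: divide_left_mono)
  moreover have "a2/z^2 \<le> 0" using a2_nonpos by (simp add: divide_nonpos_nonneg)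
  moreover have "(2*a1 + 3*a0)/K^3 < a4" using steep_at_K K_pos by (simp add: pos_divide_less_eq)
  ultimately show ?thesis by (simp add: add_divide_distrib)
qed

lemma P_over_cube_strict_mono:
  assumes "K \<le> x" "x < y"
  shows "P x / x^3 < P y / y^3"
proof -
  define g where "g z = a4*z + a3 + a2/z + a1/z^2 + a0/z^3" for z
  have g_eq: "P z / z^3 = g z" if "z \<noteq> 0" for z
    using that unfolding quartic_eq g_def by (simp add: field_simps power_numeral_reduce)
  have "g x < g y"
  proof (rule DERIV_pos_imp_increasing[OF assms(2)])
    fix z assume "x \<le> z" "z \<le> y"
    then have "K \<le> z" using assms by linarith
    then have "z \<noteq> 0" using K_ge_1 by linarith
    have "(g has_real_derivative a4 - a2/z^2 - 2*a1/z^3 - 3*a0/z^4) (at z)"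
      unfolding g_def using \<open>z \<noteq> 0\<close>
      by (auto intro!: derivative_eq_intros simp: field_simps power_numeral_reduce)
    then show "\<exists>d. (g has_real_derivative d) (at z) \<and> 0 < d"
      using P_over_cube_deriv_pos[OF \<open>K \<le> z\<close>] by blast
  qed
  moreover have "x \<noteq> 0" "y \<noteq> 0" using assms K_ge_1 by linarith+
  ultimately show ?thesis by (simp add: g_eq)
qed

lemma P_tendsto_at_top: "filterlim P at_top at_top"
  unfolding quartic_eq[abs_def] using lead_pos by real_asymp

lemma isCont_P: "isCont P x"
  unfolding quartic_eq[abs_def] by (intro continuous_intros)

lemma root_above_exists: "\<exists>x>K. P x = 0"
proof -
  have P_K: "P K < 0" using negative_on_interval K_ge_1 by simp
  have "\<forall>\<^sub>F x in at_top. 0 \<le> P x \<and> K \<le> x"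
    using P_tendsto_at_top by (auto simp: filterlim_at_top intro: eventually_conj eventually_ge_at_top)
  then obtain X where "0 \<le> P X" "K \<le> X" by (auto simp: eventually_at_top_linorder)
  then obtain x where "K \<le> x" "P x = 0"
    using IVT[of P K 0 X] P_K isCont_P by force
  moreover have "x \<noteq> K" using P_K \<open>P x = 0\<close> by auto
  ultimately show ?thesis by (metis order_le_neq_trans)
qed

lemma root_above_unique:
  assumes "K < x" "K < y" "P x = 0" "P y = 0"
  shows "x = y"
  using P_over_cube_strict_mono[of x y] P_over_cube_strict_mono[of y x] assms
  by (cases x y rule: linorder_cases) auto

theorem roots_separated:
  "(\<exists>!x. x > K \<and> P x = 0) \<and> (\<forall>x. P x = 0 \<and> \<not> x > K \<longrightarrow> x < 1)"
  using root_above_exists root_above_unique negative_on_interval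
  by (metis less_irrefl not_le)

end

definition calP_coeff4 :: "nat \<Rightarrow> real" where
  "calP_coeff4 n = 8*real n^3 - 12*real n^2 + 2*real n + 1"

definition calP_coeff3 :: "nat \<Rightarrow> real" where
  "calP_coeff3 n = -64*real n^6 + 192*real n^5 - 192*real n^4 + 64*real n^3 + 4*real n^2 + 2*real n - 4"

definition calP_coeff2 :: "nat \<Rightarrow> real" where
  "calP_coeff2 n = -96*real n^5 + 224*real n^4 - 168*real n^3 + 52*real n^2 - 18*real n + 6"

definition calP_coeff1 :: "nat \<Rightarrow> real" where
  "calP_coeff1 n = 32*real n^5 - 112*real n^4 + 128*real n^3 - 68*real n^2 + 22*real n - 4"

definition calP_coeff0 :: "nat \<Rightarrow> real" where
  "calP_coeff0 n = (2*real n - 1)^4"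

lemma calP_eq:
  "calP n x = calP_coeff4 n * x^4 + calP_coeff3 n * x^3 + calP_coeff2 n * x^2
    + calP_coeff1 n * x + calP_coeff0 n"
  unfolding calP_def calP_coeff4_def calP_coeff3_def calP_coeff2_def calP_coeff1_def calP_coeff0_def
  by algebra

lemma calP_root_separation:
  assumes "n \<ge> 2"
  shows "quartic_root_separation (calP n)
           (calP_coeff4 n) (calP_coeff3 n) (calP_coeff2 n) (calP_coeff1 n) (calP_coeff0 n)
           ((2*real n - 1)^2)"
proof -
  obtain k where n: "n = k + 2" using assms by (metis add.commute le_Suc_ex)
  have "calP_coeff2 n = - real (654 + 2338*k + 3260*k^2 + 2216*k^3 + 736*k^4 + 96*k^5)"
    by (simp add: calP_coeff2_def n) algebra
  moreover have "calP_coeff1 n = real (24 + 262*k + 572*k^2 + 512*k^3 + 208*k^4 + 32*k^5)"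
    by (simp add: calP_coeff1_def n) algebra
  moreover have "calP_coeff4 n * (2*real n - 1)^2 + calP_coeff3 n + calP_coeff1 n + calP_coeff0 n
      = - real (202 + 1106*k + 2424*k^2 + 2720*k^3 + 1648*k^4 + 512*k^5 + 64*k^6)"
    by (simp add: calP_coeff4_def calP_coeff3_def calP_coeff1_def calP_coeff0_def n) algebra
  moreover have "calP_coeff4 n * ((2*real n - 1)^2)^3 - 2*calP_coeff1 n - 3*calP_coeff0 n
      = real (15018 + 96514*k + 272312*k^2 + 443216*k^3 + 459184*k^4 + 314432*k^5
          + 142464*k^6 + 41216*k^7 + 6912*k^8 + 512*k^9)"
    by (simp add: calP_coeff4_def calP_coeff1_def calP_coeff0_def n) algebra
  moreover have "1 \<le> (2*real n - 1)^2" using assms by simp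
  ultimately show ?thesis
    by unfold_locales
      (simp_all add: calP_eq calP_coeff0_def del: of_nat_add of_nat_mult of_nat_power of_nat_numeral)
qed

theorem lemma2p1:
  fixes n :: nat
  assumes "n \<ge> 2"
  shows "(\<exists>!x::real. x > (2*real n - 1)^2 \<and> calP n x = 0)
       \<and> (\<forall>x::real. calP n x = 0 \<and> \<not> x > (2*real n - 1)^2 \<longrightarrow> x < 1)"
  using calP_root_separation[OF assms] by (rule quartic_root_separation.roots_separated)

end
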